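(* Let $\mathcal{A}$ be the adjacency matrix of a graph on nodes $1,\dots,N$ with $\mathcal{A}_{ii}=1$ for all $i$, and let $H$ be a finite-dimensional, proper LTI system (proper rational transfer matrix) whose input and output are each partitioned into $N$ sub-signals. If $H$ is TF-structured with respect to $\mathcal{A}$, then $H$ is $\mathcal{A}$-structured-realizable. If in addition the feedthrough term $H(\infty)$ is block diagonal, then $H$ is also $\mathcal{A}$-network-realizable. The converse does not hold: there exist a graph $\mathcal{A}$ and a system $H$ which is $\mathcal{A}$-structured-realizable (and even $\mathcal{A}$-network-realizable) but not TF-structured with respect to $\mathcal{A}$.
   Context: A matrix $M$ partitioned into $N\times N$ blocks is called $\mathcal{A}$-structured, written $M\in\mathcal{S}(\mathcal{A})$, if its $(i,j)$ block is zero whenever $\mathcal{A}_{ij}=0$. An LTI system $H$ with inputs and outputs partitioned into $N$ sub-signals is $\mathcal{A}$-structured-realizable if it has a state-space realization $H(s)=C(sI-A)^{-1}B+D$, with the state also partitioned into $N$ (possibly empty) sub-states, such that $A,B,C,D\in\mathcal{S}(\mathcal{A})$; it is $\mathcal{A}$-network-realizable if in addition either both $B,D$ or both $C,D$ are block diagonal. $H$ is TF-structured with respect to $\mathcal{A}$ if the $(i,j)$ block $H_{ij}(s)$ of its transfer matrix is identically zero whenever $\mathcal{A}_{ij}=0$. *)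

theory Defs
  imports "HOL-Analysis.Analysis" "HOL-Computational_Algebra.Polynomial"
          "Jordan_Normal_Form.Gauss_Jordan_Elimination"
begin

(* A partition of an index range {0..<sum_list ss} into length ss consecutive
   (possibly empty) blocks of sizes ss!0, ss!1, ...  blk ss k is the block
   containing position k. *)
definition blk :: "nat list \<Rightarrow> nat \<Rightarrow> nat" where
  "blk ss k = (LEAST i. k < sum_list (take (Suc i) ss))"

definition structured :: "(nat \<Rightarrow> nat \<Rightarrow> bool) \<Rightarrow> nat list \<Rightarrow> nat list \<Rightarrow> 'a::zero mat \<Rightarrow> bool" where
  "structured Adj rs cs M \<longleftrightarrow>
     M \<in> carrier_mat (sum_list rs) (sum_list cs) \<and>
     (\<forall>k < sum_list rs. \<forall>l < sum_list cs. \<not> Adj (blk rs k) (blk cs l) \<longrightarrow> M $$ (k, l) = 0)"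

definition block_diag :: "nat list \<Rightarrow> nat list \<Rightarrow> 'a::zero mat \<Rightarrow> bool" where
  "block_diag rs cs M \<longleftrightarrow> structured (\<lambda>i j. i = j) rs cs M"

(* transfer matrix C (sI - A)^{-1} B + D of a real state-space realization,
   evaluated at s (meaningful where sI - A is invertible) *)
definition tfm :: "real mat \<Rightarrow> real mat \<Rightarrow> real mat \<Rightarrow> real mat \<Rightarrow> complex \<Rightarrow> complex mat" where
  "tfm A B C D s =
     map_mat complex_of_real C *
     the (mat_inverse (s \<cdot>\<^sub>m 1\<^sub>m (dim_row A) - map_mat complex_of_real A)) *
     map_mat complex_of_real B + map_mat complex_of_real D"

(* H realized by (A,B,C,D): equal as rational matrices, i.e. for all but finitely many s *)
definition realizes :: "real mat \<Rightarrow> real mat \<Rightarrow> real mat \<Rightarrow> real mat \<Rightarrow> (complex \<Rightarrow> complex mat) \<Rightarrow> bool" where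
  "realizes A B C D H \<longleftrightarrow> (\<forall>\<^sub>F s in cofinite. H s = tfm A B C D s)"

definition proper_rational_tf :: "nat list \<Rightarrow> nat list \<Rightarrow> (complex \<Rightarrow> complex mat) \<Rightarrow> bool" where
  "proper_rational_tf ps ms H \<longleftrightarrow>
     (\<forall>s. H s \<in> carrier_mat (sum_list ps) (sum_list ms)) \<and>
     (\<forall>k < sum_list ps. \<forall>l < sum_list ms. \<exists>n d :: real poly.
        d \<noteq> 0 \<and> degree n \<le> degree d \<and>
        (\<forall>\<^sub>F s in cofinite. H s $$ (k, l) =
            poly (map_poly complex_of_real n) s / poly (map_poly complex_of_real d) s))"

definition structured_realizable :: "(nat \<Rightarrow> nat \<Rightarrow> bool) \<Rightarrow> nat list \<Rightarrow> nat list \<Rightarrow> (complex \<Rightarrow> complex mat) \<Rightarrow> bool" where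
  "structured_realizable Adj ps ms H \<longleftrightarrow>
     (\<exists>ns A B C D. length ns = length ps \<and>
        structured Adj ns ns A \<and> structured Adj ns ms B \<and>
        structured Adj ps ns C \<and> structured Adj ps ms D \<and> realizes A B C D H)"

definition network_realizable :: "(nat \<Rightarrow> nat \<Rightarrow> bool) \<Rightarrow> nat list \<Rightarrow> nat list \<Rightarrow> (complex \<Rightarrow> complex mat) \<Rightarrow> bool" where
  "network_realizable Adj ps ms H \<longleftrightarrow>
     (\<exists>ns A B C D. length ns = length ps \<and>
        structured Adj ns ns A \<and> structured Adj ns ms B \<and>
        structured Adj ps ns C \<and> structured Adj ps ms D \<and> realizes A B C D H \<and>
        ((block_diag ns ms B \<and> block_diag ps ms D) \<or> (block_diag ps ns C \<and> block_diag ps ms D)))"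

definition tf_structured :: "(nat \<Rightarrow> nat \<Rightarrow> bool) \<Rightarrow> nat list \<Rightarrow> nat list \<Rightarrow> (complex \<Rightarrow> complex mat) \<Rightarrow> bool" where
  "tf_structured Adj ps ms H \<longleftrightarrow>
     (\<forall>k < sum_list ps. \<forall>l < sum_list ms. \<not> Adj (blk ps k) (blk ms l) \<longrightarrow>
        (\<forall>\<^sub>F s in cofinite. H s $$ (k, l) = 0))"

definition feedthrough_block_diag :: "nat list \<Rightarrow> nat list \<Rightarrow> (complex \<Rightarrow> complex mat) \<Rightarrow> bool" where
  "feedthrough_block_diag ps ms H \<longleftrightarrow>
     (\<forall>k < sum_list ps. \<forall>l < sum_list ms. blk ps k \<noteq> blk ms l \<longrightarrow>
        ((\<lambda>s. H s $$ (k, l)) \<longlongrightarrow> 0) at_infinity)"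

end

theory Submission
  imports Defs "Jordan_Normal_Form.Char_Poly"
begin

(* Bring all entries of H to one monic common denominator d of degree n > 0, so that
   H_kl = r_kl / d + c_kl with deg r_kl < n, and r_kl = c_kl = 0 wherever TF-structure forces
   H_kl = 0. Give every output k its own n states, attached to the node of output k and
   evolving by the companion matrix of d in observer form, read out through the last of
   them and driven by the coefficients of r_kl. Then A and C are block diagonal, B and D
   inherit the zero pattern of H, and D = H(infinity), so a block-diagonal feedthrough
   makes D block diagonal as well. *)

lemma sum_list_take_mono:
  "i \<le> j \<Longrightarrow> sum_list (take i (ss :: nat list)) \<le> sum_list (take j ss)"
proof (induction ss arbitrary: i j)
  case (Cons a ss)
  then show ?case by (cases i; cases j; auto)
qed simp

lemma blk_eqI:
  assumes "sum_list (take i ss) \<le> k" and "k < sum_list (take (Suc i) ss)"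
  shows "blk ss k = i"
  unfolding blk_def
proof (rule Least_equality)
  fix j assume "k < sum_list (take (Suc j) ss)"
  then have "\<not> Suc j \<le> i"
    using assms(1) sum_list_take_mono[of "Suc j" i ss] by linarith
  then show "i \<le> j" by simp
qed (fact assms(2))

lemma blk_bounds:
  assumes "k < sum_list ss"
  shows "blk ss k < length ss" and "sum_list (take (blk ss k) ss) \<le> k"
    and "k < sum_list (take (Suc (blk ss k)) ss)"
proof -
  have "\<exists>i < length ss. sum_list (take i ss) \<le> k \<and> k < sum_list (take (Suc i) ss)"
    using assms
  proof (induction ss arbitrary: k)
    case (Cons a ss)
    show ?case
    proof (cases "k < a")
      case False
      with Cons.prems have "k - a < sum_list ss" by simp
      with Cons.IH obtain i where "i < length ss" "sum_list (take i ss) \<le> k - a"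
        "k - a < sum_list (take (Suc i) ss)" by blast
      with False show ?thesis by (intro exI[of _ "Suc i"]) auto
    qed (intro exI[of _ 0], auto)
  qed simp
  then obtain i where "i < length ss" "sum_list (take i ss) \<le> k" "k < sum_list (take (Suc i) ss)"
    by blast
  moreover from this have "blk ss k = i" by (intro blk_eqI)
  ultimately show "blk ss k < length ss" "sum_list (take (blk ss k) ss) \<le> k"
    "k < sum_list (take (Suc (blk ss k)) ss)" by simp_all
qed

lemma blk_map_mult:
  assumes "0 < n" and "q < n * sum_list ps"
  shows "blk (map ((*) n) ps) q = blk ps (q div n)"
proof (rule blk_eqI)
  have "q div n < sum_list ps"
    using assms by (simp add: div_less_iff_less_mult mult.commute)
  note bounds = blk_bounds(2,3)[OF this]
  have take_map: "sum_list (take j (map ((*) n) ps)) = n * sum_list (take j ps)" for j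
    by (simp add: take_map sum_list_const_mult)
  show "sum_list (take (blk ps (q div n)) (map ((*) n) ps)) \<le> q"
    unfolding take_map using bounds(1)
    by (meson dual_order.trans mult_le_mono2 times_div_less_eq_dividend)
  show "q < sum_list (take (Suc (blk ps (q div n))) (map ((*) n) ps))"
    unfolding take_map using bounds(2) assms(1) by (simp add: div_less_iff_less_mult mult.commute)
qed

lemma block_diag_imp_structured:
  assumes "block_diag rs cs M" and "\<forall>i < length rs. Adj i i"
  shows "structured Adj rs cs M"
  using assms blk_bounds(1) unfolding block_diag_def structured_def by metis

abbreviation cpoly :: "real poly \<Rightarrow> complex \<Rightarrow> complex" where
  "cpoly p \<equiv> poly (map_poly complex_of_real p)"

interpretation of_real_poly: map_poly_inj_idom_hom complex_of_real ..

lemma cpoly_mult [simp]: "cpoly (p * q) s = cpoly p s * cpoly q s"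
  by (simp add: of_real_poly.hom_mult)

lemma cpoly_diff [simp]: "cpoly (p - q) s = cpoly p s - cpoly q s"
  by (simp add: of_real_poly.hom_minus)

lemma cpoly_smult [simp]: "cpoly (Polynomial.smult c p) s = of_real c * cpoly p s"
  by (simp add: map_poly_smult)

lemma cpoly_eq_sum_lessThan:
  assumes "degree p < n"
  shows "cpoly p s = (\<Sum>i<n. of_real (coeff p i) * s ^ i)"
proof -
  have "cpoly p s = (\<Sum>i\<le>degree p. of_real (coeff p i) * s ^ i)"
    by (simp add: poly_altdef)
  also have "\<dots> = (\<Sum>i<n. of_real (coeff p i) * s ^ i)"
    by (rule sum.mono_neutral_left) (use assms in \<open>auto simp: coeff_eq_0\<close>)
  finally show ?thesis .
qed

lemma cpoly_monic:
  assumes "lead_coeff d = 1"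
  shows "cpoly d s = s ^ degree d + (\<Sum>i<degree d. of_real (coeff d i) * s ^ i)"
proof -
  have "cpoly d s = (\<Sum>i<Suc (degree d). of_real (coeff d i) * s ^ i)"
    by (simp add: poly_altdef lessThan_Suc_atMost)
  then show ?thesis
    using assms by simp
qed

lemma eventually_cpoly_nonzero:
  assumes "p \<noteq> 0"
  shows "\<forall>\<^sub>F s in cofinite. cpoly p s \<noteq> 0"
  using poly_roots_finite[of "map_poly complex_of_real p"] assms
  by (simp add: eventually_cofinite)

lemma eventually_cofinite_imp_at_infinity:
  fixes P :: "'a::real_normed_vector \<Rightarrow> bool"
  assumes "\<forall>\<^sub>F x in cofinite. P x"
  shows "\<forall>\<^sub>F x in at_infinity. P x"
proof -
  have "bounded {x. \<not> P x}"
    using assms by (simp add: eventually_cofinite finite_imp_bounded)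
  then obtain b where "\<And>x. \<not> P x \<Longrightarrow> norm x \<le> b"
    unfolding bounded_iff by blast
  then show ?thesis
    unfolding eventually_at_infinity by (intro exI[of _ "b + 1"]) force
qed

lemma tendsto_proper_fraction_at_infinity:
  assumes "degree r < degree d"
    and "\<forall>\<^sub>F s in cofinite. f s = cpoly r s / cpoly d s + of_real c"
  shows "(f \<longlongrightarrow> of_real c) at_infinity"
proof (rule Lim_transform_eventually)
  have "((\<lambda>s. cpoly r s / cpoly d s) \<longlongrightarrow> 0) at_infinity"
    by (rule poly_divide_tendsto_0_at_infinity) (use assms(1) in simp)
  then show "((\<lambda>s. cpoly r s / cpoly d s + of_real c) \<longlongrightarrow> of_real c) at_infinity"
    using tendsto_add[OF _ tendsto_const, of _ 0 _ "of_real c"] by simp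
  show "\<forall>\<^sub>F s in at_infinity. cpoly r s / cpoly d s + of_real c = f s"
    using eventually_cofinite_imp_at_infinity[OF assms(2)] by (simp add: eq_commute)
qed

lemma common_monic_multiple:
  fixes q :: "'i \<Rightarrow> 'a::field poly"
  assumes "finite I" and "\<And>i. i \<in> I \<Longrightarrow> q i \<noteq> 0"
  obtains d where "lead_coeff d = 1" and "0 < degree d" and "\<And>i. i \<in> I \<Longrightarrow> q i dvd d"
proof -
  \<comment> \<open>The factor \<open>[:0, 1:]\<close> only makes the degree positive.\<close>
  define P where "P = [:0, 1:] * (\<Prod>i\<in>I. q i)"
  have "(\<Prod>i\<in>I. q i) \<noteq> 0"
    using assms by simp
  then have "P \<noteq> 0" and "0 < degree P"
    unfolding P_def by (simp_all add: degree_mult_eq)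
  moreover have "q i dvd P" if "i \<in> I" for i
    unfolding P_def using assms(1) that by (intro dvd_mult dvd_prodI)
  ultimately show ?thesis
    by (intro that[of "Polynomial.smult (inverse (lead_coeff P)) P"]) (simp_all add: dvd_smult)
qed

lemma degree_sub_smult_monic_less:
  fixes p d :: "'a::comm_ring_1 poly"
  assumes "lead_coeff d = 1" and "0 < degree d" and "degree p \<le> degree d"
  shows "degree (p - Polynomial.smult (coeff p (degree d)) d) < degree d"
proof -
  let ?r = "p - Polynomial.smult (coeff p (degree d)) d"
  have "degree ?r \<le> degree d"
    using assms(3) degree_smult_le by (intro degree_diff_le) blast+
  moreover have "coeff ?r (degree d) = 0"
    using assms(1) by simp
  ultimately show ?thesis
    using assms(2) by (metis degree_0 le_neq_implies_less leading_coeff_0_iff)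
qed

lemma eventually_fraction_over_multiple:
  fixes p q d :: "real poly"
  assumes "q \<noteq> 0" and "degree p \<le> degree q" and "q dvd d"
    and "lead_coeff d = 1" and "0 < degree d"
    and "\<forall>\<^sub>F s in cofinite. h s = cpoly p s / cpoly q s"
  shows "\<exists>r c. degree r < degree d \<and> (p = 0 \<longrightarrow> r = 0 \<and> c = 0) \<and>
    (\<forall>\<^sub>F s in cofinite. h s = cpoly r s / cpoly d s + of_real c)"
proof -
  obtain u where d: "d = q * u"
    using assms(3) by blast
  define c where "c = coeff (p * u) (degree d)"
  define r where "r = p * u - Polynomial.smult c d"
  have "u \<noteq> 0"
    using d assms(5) by auto
  then have "degree (p * u) \<le> degree d"
    unfolding d using assms(1,2) degree_mult_le[of p u] by (simp add: degree_mult_eq)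
  then have "degree r < degree d"
    unfolding r_def c_def using assms(4,5) by (rule degree_sub_smult_monic_less[rotated 2])
  moreover have "p = 0 \<longrightarrow> r = 0 \<and> c = 0"
    unfolding r_def c_def by simp
  moreover have split: "cpoly p s / cpoly q s = cpoly r s / cpoly d s + of_real c"
    if "cpoly d s \<noteq> 0" for s
  proof -
    have "cpoly q s \<noteq> 0" "cpoly u s \<noteq> 0"
      using that unfolding d by simp_all
    then have "cpoly p s / cpoly q s = cpoly (p * u) s / cpoly d s"
      unfolding d by simp
    also have "cpoly (p * u) s = cpoly r s + of_real c * cpoly d s"
      unfolding r_def by simp
    finally show ?thesis
      using that by (simp add: add_divide_distrib)
  qed
  have "d \<noteq> 0"
    using assms(5) by auto
  from eventually_conj[OF assms(6) eventually_cpoly_nonzero[OF this]]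
  have "\<forall>\<^sub>F s in cofinite. h s = cpoly r s / cpoly d s + of_real c"
    by (rule eventually_mono) (simp add: split)
  ultimately show ?thesis
    by blast
qed

lemma bchoice_less2:
  assumes "\<forall>k < a. \<forall>l < b. \<exists>x y. P k l x y"
  obtains f g where "\<And>k l. k < a \<Longrightarrow> l < b \<Longrightarrow> P k l (f k l) (g k l)"
proof -
  have "\<forall>k. \<forall>l. \<exists>xy. k < a \<longrightarrow> l < b \<longrightarrow> P k l (fst xy) (snd xy)"
    using assms by simp
  then obtain h where "\<forall>k l. k < a \<longrightarrow> l < b \<longrightarrow> P k l (fst (h k l)) (snd (h k l))"
    unfolding choice_iff by blast
  then show ?thesis
    by (intro that[of "\<lambda>k l. fst (h k l)" "\<lambda>k l. snd (h k l)"]) simp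
qed

lemma tf_structured_entry_fractions:
  assumes "proper_rational_tf ps ms H" and "tf_structured Adj ps ms H"
  shows "\<forall>k < sum_list ps. \<forall>l < sum_list ms.
    \<exists>p q. degree p \<le> degree q \<and> q \<noteq> 0 \<and> (\<not> Adj (blk ps k) (blk ms l) \<longrightarrow> p = 0) \<and>
      (\<forall>\<^sub>F s in cofinite. H s $$ (k, l) = cpoly p s / cpoly q s)"
proof (intro allI impI)
  fix k l assume kl: "k < sum_list ps" "l < sum_list ms"
  show "\<exists>p q. degree p \<le> degree q \<and> q \<noteq> 0 \<and> (\<not> Adj (blk ps k) (blk ms l) \<longrightarrow> p = 0) \<and>
      (\<forall>\<^sub>F s in cofinite. H s $$ (k, l) = cpoly p s / cpoly q s)"
  proof (cases "Adj (blk ps k) (blk ms l)")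
    case True
    from assms(1) kl obtain p q where "q \<noteq> 0" "degree p \<le> degree q"
      "\<forall>\<^sub>F s in cofinite. H s $$ (k, l) = cpoly p s / cpoly q s"
      unfolding proper_rational_tf_def by blast
    with True show ?thesis
      by blast
  next
    case False
    then have "\<forall>\<^sub>F s in cofinite. H s $$ (k, l) = cpoly 0 s / cpoly 1 s"
      using assms(2) kl unfolding tf_structured_def by simp
    with False show ?thesis
      by (intro exI[of _ 0] exI[of _ 1]) simp
  qed
qed

lemma tf_structured_common_denominator:
  assumes "proper_rational_tf ps ms H" and "tf_structured Adj ps ms H"
  obtains d R c where "lead_coeff d = 1" and "0 < degree d"
    and "\<forall>k < sum_list ps. \<forall>l < sum_list ms. degree (R k l) < degree d"
    and "\<forall>k < sum_list ps. \<forall>l < sum_list ms. \<not> Adj (blk ps k) (blk ms l) \<longrightarrow>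
      R k l = 0 \<and> c k l = 0"
    and "\<forall>k < sum_list ps. \<forall>l < sum_list ms.
      \<forall>\<^sub>F s in cofinite. H s $$ (k, l) = cpoly (R k l) s / cpoly d s + of_real (c k l)"
proof -
  obtain p q where pq: "\<And>k l. k < sum_list ps \<Longrightarrow> l < sum_list ms \<Longrightarrow>
      degree (p k l) \<le> degree (q k l) \<and> q k l \<noteq> 0 \<and> (\<not> Adj (blk ps k) (blk ms l) \<longrightarrow> p k l = 0) \<and>
      (\<forall>\<^sub>F s in cofinite. H s $$ (k, l) = cpoly (p k l) s / cpoly (q k l) s)"
    by (rule bchoice_less2[OF tf_structured_entry_fractions[OF assms]]) (rule that)
  obtain d where d: "lead_coeff d = 1" "0 < degree d"
    and q_dvd: "\<And>kl. kl \<in> {..<sum_list ps} \<times> {..<sum_list ms} \<Longrightarrow> case_prod q kl dvd d"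
    by (rule common_monic_multiple[of "{..<sum_list ps} \<times> {..<sum_list ms}" "case_prod q"])
      (use pq in auto)
  have "\<forall>k < sum_list ps. \<forall>l < sum_list ms.
      \<exists>r c. degree r < degree d \<and> (\<not> Adj (blk ps k) (blk ms l) \<longrightarrow> r = 0 \<and> c = 0) \<and>
      (\<forall>\<^sub>F s in cofinite. H s $$ (k, l) = cpoly r s / cpoly d s + of_real c)"
  proof (intro allI impI)
    fix k l assume kl: "k < sum_list ps" "l < sum_list ms"
    have "\<exists>r c. degree r < degree d \<and> (p k l = 0 \<longrightarrow> r = 0 \<and> c = 0) \<and>
      (\<forall>\<^sub>F s in cofinite. H s $$ (k, l) = cpoly r s / cpoly d s + of_real c)"
      using pq[OF kl] q_dvd[of "(k, l)"] kl d by (intro eventually_fraction_over_multiple) auto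
    then show "\<exists>r c. degree r < degree d \<and> (\<not> Adj (blk ps k) (blk ms l) \<longrightarrow> r = 0 \<and> c = 0) \<and>
      (\<forall>\<^sub>F s in cofinite. H s $$ (k, l) = cpoly r s / cpoly d s + of_real c)"
      using pq[OF kl] by blast
  qed
  then obtain R c where Rc: "\<And>k l. k < sum_list ps \<Longrightarrow> l < sum_list ms \<Longrightarrow> degree (R k l) < degree d \<and>
      (\<not> Adj (blk ps k) (blk ms l) \<longrightarrow> R k l = 0 \<and> c k l = 0) \<and>
      (\<forall>\<^sub>F s in cofinite. H s $$ (k, l) = cpoly (R k l) s / cpoly d s + of_real (c k l))"
    by (rule bchoice_less2) (rule that)
  show ?thesis
    by (rule that[of d R c]) (use d Rc in blast)+
qed

definition companion :: "real poly \<Rightarrow> real mat" where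
  "companion d = mat (degree d) (degree d) (\<lambda>(i, j).
     (if i = Suc j then 1 else 0) - (if j = degree d - 1 then coeff d i else 0))"

(* State q of the observer form is state q mod degree d of the copy of the companion
   form that serves output q div degree d. *)

definition observer_A :: "nat \<Rightarrow> real poly \<Rightarrow> real mat" where
  "observer_A p d = mat (p * degree d) (p * degree d) (\<lambda>(q, q').
     if q div degree d = q' div degree d
     then companion d $$ (q mod degree d, q' mod degree d) else 0)"

definition observer_B :: "nat \<Rightarrow> nat \<Rightarrow> real poly \<Rightarrow> (nat \<Rightarrow> nat \<Rightarrow> real poly) \<Rightarrow> real mat" where
  "observer_B p m d R =
     mat (p * degree d) m (\<lambda>(q, l). coeff (R (q div degree d) l) (q mod degree d))"

definition observer_C :: "nat \<Rightarrow> real poly \<Rightarrow> real mat" where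
  "observer_C p d = mat p (p * degree d) (\<lambda>(k, q).
     if q div degree d = k \<and> q mod degree d = degree d - 1 then 1 else 0)"

lemma sum_lessThan_mult_div_eq:
  fixes f :: "nat \<Rightarrow> 'a::comm_monoid_add"
  assumes "k < p"
  shows "(\<Sum>q<p * n. if q div n = k then f (q mod n) else 0) = (\<Sum>i<n. f i)"
proof -
  have block: "{q \<in> {..<p * n}. q div n = k} = (+) (k * n) ` {..<n}"
  proof (intro equalityI subsetI)
    fix q assume "q \<in> {q \<in> {..<p * n}. q div n = k}"
    then have "q < p * n" and "q div n = k" by simp_all
    then have "0 < n" by (cases n) simp_all
    with \<open>q div n = k\<close> show "q \<in> (+) (k * n) ` {..<n}"
      using div_mult_mod_eq[of q n]
      by (intro image_eqI[of _ _ "q mod n"]) (simp_all add: mult.commute)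
  next
    fix q assume "q \<in> (+) (k * n) ` {..<n}"
    then obtain i where i: "i < n" and q: "q = k * n + i" by blast
    have "k * n + i < Suc k * n" using i by simp
    also have "\<dots> \<le> p * n" using assms by (intro mult_le_mono1) simp
    finally show "q \<in> {q \<in> {..<p * n}. q div n = k}"
      using i q by simp
  qed
  have "(\<Sum>q<p * n. if q div n = k then f (q mod n) else 0) =
      (\<Sum>q\<in>{q \<in> {..<p * n}. q div n = k}. f (q mod n))"
    by (rule sum.inter_filter[symmetric]) simp
  also have "\<dots> = (\<Sum>i<n. f i)"
    unfolding block by (subst sum.reindex) (auto intro: sum.cong)
  finally show ?thesis .
qed

lemma companion_left_kernel:
  assumes "lead_coeff d = 1" and "j < degree d"
  shows "(\<Sum>i<degree d. s ^ i * ((if i = j then s else 0) - of_real (companion d $$ (i, j)))) =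
    (if j = degree d - 1 then cpoly d s else 0)"
proof -
  let ?n = "degree d"
  have summand: "s ^ i * ((if i = j then s else 0) - of_real (companion d $$ (i, j))) =
      (if i = j then s ^ Suc j else 0) - (if i = Suc j then s ^ Suc j else 0) +
      (if j = ?n - 1 then of_real (coeff d i) * s ^ i else 0)" if "i < ?n" for i
    using that assms(2) by (auto simp: companion_def algebra_simps)
  have "(\<Sum>i<?n. s ^ i * ((if i = j then s else 0) - of_real (companion d $$ (i, j)))) =
      (\<Sum>i<?n. if i = j then s ^ Suc j else 0) - (\<Sum>i<?n. if i = Suc j then s ^ Suc j else 0) +
      (if j = ?n - 1 then (\<Sum>i<?n. of_real (coeff d i) * s ^ i) else 0)"
    by (simp add: summand sum.distrib sum_subtractf)
  also have "\<dots> = s ^ Suc j - (if Suc j < ?n then s ^ Suc j else 0) +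
      (if j = ?n - 1 then (\<Sum>i<?n. of_real (coeff d i) * s ^ i) else 0)"
    using assms(2) by simp
  also have "\<dots> = (if j = ?n - 1 then cpoly d s else 0)"
    using assms cpoly_monic[OF assms(1), of s] by (auto simp flip: power_Suc)
  finally show ?thesis .
qed

lemma observer_resolvent_entry:
  assumes "q < p * degree d" and "q' < p * degree d"
  shows "(s \<cdot>\<^sub>m 1\<^sub>m (p * degree d) - map_mat complex_of_real (observer_A p d)) $$ (q, q') =
    (if q div degree d = q' div degree d
     then (if q mod degree d = q' mod degree d then s else 0) -
       of_real (companion d $$ (q mod degree d, q' mod degree d))
     else 0)"
proof -
  have "q = q' \<longleftrightarrow> q div degree d = q' div degree d \<and> q mod degree d = q' mod degree d"
    by (metis div_mult_mod_eq)
  then show ?thesis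
    using assms by (auto simp: observer_A_def)
qed

(* The left factor is C (sI - A)^-1: output k sees (1, s, ..., s^(n-1)) / d(s) on its own
   states, by companion_left_kernel. *)

lemma observer_left_solution:
  assumes "lead_coeff d = 1" and "cpoly d s \<noteq> 0"
  shows "mat p (p * degree d)
        (\<lambda>(k, q). if q div degree d = k then s ^ (q mod degree d) / cpoly d s else 0) *
      (s \<cdot>\<^sub>m 1\<^sub>m (p * degree d) - map_mat complex_of_real (observer_A p d)) =
    map_mat complex_of_real (observer_C p d)"
    (is "?V * ?M = ?C")
proof (rule eq_matI)
  let ?n = "degree d"
  fix k q' assume "k < dim_row ?C" and "q' < dim_col ?C"
  then have k: "k < p" and q': "q' < p * ?n"
    by (simp_all add: observer_C_def)
  have "(?V * ?M) $$ (k, q') = (\<Sum>q<p * ?n. ?V $$ (k, q) * ?M $$ (q, q'))"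
    using k q' by (simp add: observer_A_def scalar_prod_def atLeast0LessThan)
  also have "\<dots> = (\<Sum>q<p * ?n. if q div ?n = k then s ^ (q mod ?n) / cpoly d s *
      (if k = q' div ?n then (if q mod ?n = q' mod ?n then s else 0) -
        of_real (companion d $$ (q mod ?n, q' mod ?n)) else 0) else 0)"
    by (rule sum.cong) (use k q' in \<open>auto simp: observer_resolvent_entry\<close>)
  also have "\<dots> = (\<Sum>i<?n. s ^ i / cpoly d s *
      (if k = q' div ?n then (if i = q' mod ?n then s else 0) -
        of_real (companion d $$ (i, q' mod ?n)) else 0))"
    by (rule sum_lessThan_mult_div_eq[OF k])
  also have "\<dots> = (if k = q' div ?n \<and> q' mod ?n = ?n - 1 then 1 else 0)"
  proof (cases "k = q' div ?n")
    case True
    have "q' mod ?n < ?n"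
      using q' by (cases "?n = 0") simp_all
    then have "(\<Sum>i<?n. s ^ i * ((if i = q' mod ?n then s else 0) -
        of_real (companion d $$ (i, q' mod ?n)))) / cpoly d s =
      (if q' mod ?n = ?n - 1 then 1 else 0)"
      using companion_left_kernel[OF assms(1)] assms(2) by simp
    with True show ?thesis
      by (simp add: sum_divide_distrib)
  qed simp
  also have "\<dots> = ?C $$ (k, q')"
    using k q' by (simp add: observer_C_def)
  finally show "(?V * ?M) $$ (k, q') = ?C $$ (k, q')" .
qed (simp_all add: observer_A_def observer_C_def)

lemma eventually_resolvent_invertible:
  fixes A :: "complex mat"
  assumes "A \<in> carrier_mat n n"
  shows "\<forall>\<^sub>F s in cofinite. \<exists>Y. mat_inverse (s \<cdot>\<^sub>m 1\<^sub>m n - A) = Some Y"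
proof -
  have "char_poly A \<noteq> 0"
    using degree_monic_char_poly[OF assms] by auto
  then have "\<forall>\<^sub>F s in cofinite. poly (char_poly A) s \<noteq> 0"
    using poly_roots_finite by (simp add: eventually_cofinite)
  moreover have "\<exists>Y. mat_inverse (s \<cdot>\<^sub>m 1\<^sub>m n - A) = Some Y" if "poly (char_poly A) s \<noteq> 0" for s
  proof -
    have M: "s \<cdot>\<^sub>m 1\<^sub>m n - A \<in> carrier_mat n n"
      using assms by auto
    have "- char_matrix A s = s \<cdot>\<^sub>m 1\<^sub>m n - A"
      unfolding char_matrix_def using assms by (intro eq_matI) auto
    then have "det (s \<cdot>\<^sub>m 1\<^sub>m n - A) \<noteq> 0"
      using that char_poly_matrix[OF assms, of s] by simp
    from det_non_zero_imp_unit[OF M this, where b = "()"] mat_inverse(1)[OF M, where b = "()"]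
    show ?thesis
      by (cases "mat_inverse (s \<cdot>\<^sub>m 1\<^sub>m n - A)") auto
  qed
  ultimately show ?thesis
    by (auto elim: eventually_mono)
qed

lemma tfm_eq_of_left_solution:
  assumes "A \<in> carrier_mat r r" and "C \<in> carrier_mat p r"
    and Y: "mat_inverse (s \<cdot>\<^sub>m 1\<^sub>m r - map_mat complex_of_real A) = Some Y"
    and V: "V \<in> carrier_mat p r"
    and "V * (s \<cdot>\<^sub>m 1\<^sub>m r - map_mat complex_of_real A) = map_mat complex_of_real C"
  shows "tfm A B C D s = V * map_mat complex_of_real B + map_mat complex_of_real D"
proof -
  let ?M = "s \<cdot>\<^sub>m 1\<^sub>m r - map_mat complex_of_real A"
  have M: "?M \<in> carrier_mat r r"
    using assms(1) by auto
  from mat_inverse(2)[OF M Y] have MY: "?M * Y = 1\<^sub>m r" and Y_carrier: "Y \<in> carrier_mat r r"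
    by auto
  have "map_mat complex_of_real C * Y = V * ?M * Y"
    using assms(5) by simp
  also have "\<dots> = V"
    using V M Y_carrier MY by (simp add: assoc_mult_mat)
  finally show ?thesis
    unfolding tfm_def using assms(1) Y by simp
qed

lemma tfm_observer_form:
  assumes "lead_coeff d = 1" and "\<forall>k < p. \<forall>l < m. degree (R k l) < degree d"
    and "cpoly d s \<noteq> 0"
    and "mat_inverse (s \<cdot>\<^sub>m 1\<^sub>m (p * degree d) - map_mat complex_of_real (observer_A p d)) = Some Y"
  shows "tfm (observer_A p d) (observer_B p m d R) (observer_C p d) (mat p m (\<lambda>(k, l). c k l)) s =
    mat p m (\<lambda>(k, l). cpoly (R k l) s / cpoly d s + of_real (c k l))"
    (is "tfm ?A ?B ?C ?D s = ?T")
proof -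
  let ?n = "degree d"
  define V where
    "V = mat p (p * ?n) (\<lambda>(k, q). if q div ?n = k then s ^ (q mod ?n) / cpoly d s else 0)"
  have VM: "V * (s \<cdot>\<^sub>m 1\<^sub>m (p * ?n) - map_mat complex_of_real ?A) = map_mat complex_of_real ?C"
    unfolding V_def by (rule observer_left_solution[OF assms(1,3)])
  have "tfm ?A ?B ?C ?D s = V * map_mat complex_of_real ?B + map_mat complex_of_real ?D"
    by (rule tfm_eq_of_left_solution[where p = p, OF _ _ assms(4) _ VM])
      (simp_all add: V_def observer_A_def observer_C_def)
  also have "\<dots> = ?T"
  proof (rule eq_matI)
    fix k l assume "k < dim_row ?T" and "l < dim_col ?T"
    then have k: "k < p" and l: "l < m"
      by simp_all
    have "(V * map_mat complex_of_real ?B) $$ (k, l) =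
        (\<Sum>q<p * ?n. V $$ (k, q) * of_real (?B $$ (q, l)))"
      using k l by (simp add: V_def observer_B_def scalar_prod_def atLeast0LessThan)
    also have "\<dots> = (\<Sum>q<p * ?n. if q div ?n = k
        then s ^ (q mod ?n) / cpoly d s * of_real (coeff (R k l) (q mod ?n)) else 0)"
      by (rule sum.cong) (use k l in \<open>auto simp: V_def observer_B_def\<close>)
    also have "\<dots> = (\<Sum>i<?n. s ^ i / cpoly d s * of_real (coeff (R k l) i))"
      by (rule sum_lessThan_mult_div_eq[OF k])
    also have "\<dots> = cpoly (R k l) s / cpoly d s"
      unfolding cpoly_eq_sum_lessThan[OF assms(2)[rule_format, OF k l]]
      by (simp add: sum_divide_distrib mult.commute)
    finally show
      "(V * map_mat complex_of_real ?B + map_mat complex_of_real ?D) $$ (k, l) = ?T $$ (k, l)"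
      using k l by (simp add: V_def observer_B_def)
  qed (simp_all add: V_def observer_B_def)
  finally show ?thesis .
qed

lemma realizes_observer_form:
  assumes "lead_coeff d = 1" and "\<forall>k < p. \<forall>l < m. degree (R k l) < degree d"
    and "\<forall>\<^sub>F s in cofinite. H s = mat p m (\<lambda>(k, l). cpoly (R k l) s / cpoly d s + of_real (c k l))"
  shows "realizes (observer_A p d) (observer_B p m d R) (observer_C p d)
    (mat p m (\<lambda>(k, l). c k l)) H"
proof -
  have "d \<noteq> 0"
    using assms(1) by auto
  have "map_mat complex_of_real (observer_A p d) \<in> carrier_mat (p * degree d) (p * degree d)"
    by (simp add: observer_A_def)
  from eventually_resolvent_invertible[OF this] eventually_cpoly_nonzero[OF \<open>d \<noteq> 0\<close>] assms(3)
  show ?thesis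
    unfolding realizes_def
  proof eventually_elim
    case (elim s)
    then obtain Y where
      "mat_inverse (s \<cdot>\<^sub>m 1\<^sub>m (p * degree d) - map_mat complex_of_real (observer_A p d)) = Some Y"
      by blast
    with elim show ?case
      using tfm_observer_form[OF assms(1,2)] by simp
  qed
qed

lemma blk_observer_state:
  assumes "0 < n" and "q < sum_list ps * n"
  shows "q div n < sum_list ps" and "blk (map ((*) n) ps) q = blk ps (q div n)"
  using assms blk_map_mult[of n q ps] by (simp_all add: div_less_iff_less_mult mult.commute)

lemma observer_form_structured:
  assumes "\<forall>i < length ps. Adj i i" and "0 < degree d"
    and "\<forall>k < sum_list ps. \<forall>l < sum_list ms. \<not> Adj (blk ps k) (blk ms l) \<longrightarrow>
      R k l = 0 \<and> c k l = 0"
  defines "ns \<equiv> map ((*) (degree d)) ps"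
  shows "structured Adj ns ns (observer_A (sum_list ps) d)"
    and "structured Adj ns ms (observer_B (sum_list ps) (sum_list ms) d R)"
    and "block_diag ps ns (observer_C (sum_list ps) d)"
    and "structured Adj ps ms (mat (sum_list ps) (sum_list ms) (\<lambda>(k, l). c k l))"
proof -
  let ?n = "degree d" and ?p = "sum_list ps"
  have sum_ns: "sum_list ns = ?p * ?n"
    unfolding ns_def by (simp add: sum_list_const_mult mult.commute)
  note owner = blk_observer_state[OF assms(2), of _ ps, folded ns_def]
  show "structured Adj ns ns (observer_A ?p d)"
    unfolding structured_def sum_ns
  proof (intro conjI allI impI)
    fix q q' assume q: "q < ?p * ?n" and q': "q' < ?p * ?n" and "\<not> Adj (blk ns q) (blk ns q')"
    moreover have "Adj (blk ps (q div ?n)) (blk ps (q div ?n))"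
      using assms(1) blk_bounds(1)[OF owner(1)[OF q]] by blast
    ultimately have "q div ?n \<noteq> q' div ?n"
      using owner(2) by metis
    then show "observer_A ?p d $$ (q, q') = 0"
      using q q' by (simp add: observer_A_def)
  qed (simp add: observer_A_def)
  show "structured Adj ns ms (observer_B ?p (sum_list ms) d R)"
    unfolding structured_def sum_ns
  proof (intro conjI allI impI)
    fix q l assume q: "q < ?p * ?n" and l: "l < sum_list ms" and "\<not> Adj (blk ns q) (blk ms l)"
    then have "R (q div ?n) l = 0"
      using assms(3)[rule_format, OF owner(1)[OF q] l] owner(2)[OF q] by simp
    then show "observer_B ?p (sum_list ms) d R $$ (q, l) = 0"
      using q l by (simp add: observer_B_def)
  qed (simp add: observer_B_def)
  show "block_diag ps ns (observer_C ?p d)"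
    unfolding block_diag_def structured_def sum_ns
  proof (intro conjI allI impI)
    fix k q assume "k < ?p" and q: "q < ?p * ?n" and "blk ps k \<noteq> blk ns q"
    then show "observer_C ?p d $$ (k, q) = 0"
      using owner(2)[OF q] by (auto simp: observer_C_def)
  qed (simp add: observer_C_def)
  show "structured Adj ps ms (mat ?p (sum_list ms) (\<lambda>(k, l). c k l))"
    unfolding structured_def using assms(3) by simp
qed

lemma feedthrough_block_diag_imp_block_diag:
  assumes "feedthrough_block_diag ps ms H"
    and "\<forall>k < sum_list ps. \<forall>l < sum_list ms. degree (R k l) < degree d"
    and "\<forall>k < sum_list ps. \<forall>l < sum_list ms.
      \<forall>\<^sub>F s in cofinite. H s $$ (k, l) = cpoly (R k l) s / cpoly d s + of_real (c k l)"
  shows "block_diag ps ms (mat (sum_list ps) (sum_list ms) (\<lambda>(k, l). c k l))"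
  unfolding block_diag_def structured_def
proof (intro conjI allI impI)
  fix k l assume kl: "k < sum_list ps" "l < sum_list ms" and "blk ps k \<noteq> blk ms l"
  then have "((\<lambda>s. H s $$ (k, l)) \<longlongrightarrow> 0) at_infinity"
    using assms(1) unfolding feedthrough_block_diag_def by blast
  moreover have "((\<lambda>s. H s $$ (k, l)) \<longlongrightarrow> of_real (c k l)) at_infinity"
    by (rule tendsto_proper_fraction_at_infinity[OF assms(2,3)[rule_format, OF kl]])
  ultimately have "c k l = 0"
    using tendsto_unique[OF trivial_limit_at_infinity] by fastforce
  then show "mat (sum_list ps) (sum_list ms) (\<lambda>(k, l). c k l) $$ (k, l) = 0"
    using kl by simp
qed simp

lemma eventually_mat_eqI:
  assumes "\<And>s. M s \<in> carrier_mat p m"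
    and "\<And>k l. k < p \<Longrightarrow> l < m \<Longrightarrow> \<forall>\<^sub>F s in F. M s $$ (k, l) = f s k l"
  shows "\<forall>\<^sub>F s in F. M s = mat p m (\<lambda>(k, l). f s k l)"
proof -
  have "\<forall>\<^sub>F s in F. \<forall>kl \<in> {..<p} \<times> {..<m}. M s $$ kl = f s (fst kl) (snd kl)"
    by (rule eventually_ball_finite) (use assms(2) in auto)
  moreover have "dim_row (M s) = p" and "dim_col (M s) = m" for s
    using assms(1)[of s] by auto
  ultimately show ?thesis
    by (auto elim!: eventually_mono intro!: eq_matI)
qed

lemma tf_structured_imp_realizable:
  assumes "\<forall>i < length ps. Adj i i"
    and "proper_rational_tf ps ms H" and "tf_structured Adj ps ms H"
  shows "structured_realizable Adj ps ms H"
    and "feedthrough_block_diag ps ms H \<Longrightarrow> network_realizable Adj ps ms H"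
proof -
  obtain d R c where d: "lead_coeff d = 1" "0 < degree d"
    and deg: "\<forall>k < sum_list ps. \<forall>l < sum_list ms. degree (R k l) < degree d"
    and zero: "\<forall>k < sum_list ps. \<forall>l < sum_list ms. \<not> Adj (blk ps k) (blk ms l) \<longrightarrow>
      R k l = 0 \<and> c k l = 0"
    and H: "\<forall>k < sum_list ps. \<forall>l < sum_list ms.
      \<forall>\<^sub>F s in cofinite. H s $$ (k, l) = cpoly (R k l) s / cpoly d s + of_real (c k l)"
    by (rule tf_structured_common_denominator[OF assms(2,3)]) (rule that)
  have "\<forall>\<^sub>F s in cofinite. H s = mat (sum_list ps) (sum_list ms)
      (\<lambda>(k, l). cpoly (R k l) s / cpoly d s + of_real (c k l))"
    using assms(2) H unfolding proper_rational_tf_def by (intro eventually_mat_eqI) auto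
  then have realizes: "realizes (observer_A (sum_list ps) d)
      (observer_B (sum_list ps) (sum_list ms) d R) (observer_C (sum_list ps) d)
      (mat (sum_list ps) (sum_list ms) (\<lambda>(k, l). c k l)) H"
    by (rule realizes_observer_form[OF d(1) deg])
  note structured = observer_form_structured[OF assms(1) d(2) zero]
  have "length (map ((*) (degree d)) ps) = length ps"
    by simp
  note witnesses = this structured(1,2) block_diag_imp_structured[OF structured(3)] structured(4)
    realizes
  show "structured_realizable Adj ps ms H"
    unfolding structured_realizable_def using witnesses assms(1) by blast
  show "network_realizable Adj ps ms H" if "feedthrough_block_diag ps ms H"
    unfolding network_realizable_def
    using witnesses assms(1) structured(3) feedthrough_block_diag_imp_block_diag[OF that deg H]
    by blast
qed

lemma double_integrator_realization:
  "realizes (mat 2 2 (\<lambda>(i, j). if i = 1 \<and> j = 0 then 1 else 0))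
     (mat 2 1 (\<lambda>(i, j). if i = 0 then 1 else 0)) (mat 1 2 (\<lambda>(i, j). if j = 1 then 1 else 0))
     (0\<^sub>m 1 1) (\<lambda>s. mat 1 1 (\<lambda>_. 1 / s ^ 2))"
  (is "realizes ?A ?B ?C ?D ?H")
proof -
  have less_2: "i < 2 \<longleftrightarrow> i = 0 \<or> i = 1" for i :: nat
    by auto
  have "map_mat complex_of_real ?A \<in> carrier_mat 2 2"
    by simp
  from eventually_resolvent_invertible[OF this] have "\<forall>\<^sub>F s in cofinite.
      (\<exists>Y. mat_inverse (s \<cdot>\<^sub>m 1\<^sub>m 2 - map_mat complex_of_real ?A) = Some Y) \<and> s \<noteq> 0"
    by (rule eventually_conj) (simp add: eventually_cofinite)
  then show ?thesis
    unfolding realizes_def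
  proof (rule eventually_mono)
    fix s assume "(\<exists>Y. mat_inverse (s \<cdot>\<^sub>m 1\<^sub>m 2 - map_mat complex_of_real ?A) = Some Y) \<and> s \<noteq> 0"
    then obtain Y where Y: "mat_inverse (s \<cdot>\<^sub>m 1\<^sub>m 2 - map_mat complex_of_real ?A) = Some Y"
      and "s \<noteq> 0" by auto
    define V :: "complex mat" where "V = mat 1 2 (\<lambda>(i, j). if j = 0 then 1 / s ^ 2 else 1 / s)"
    have VM: "V * (s \<cdot>\<^sub>m 1\<^sub>m 2 - map_mat complex_of_real ?A) = map_mat complex_of_real ?C"
      using \<open>s \<noteq> 0\<close> by (intro eq_matI)
        (auto simp: V_def scalar_prod_def numeral_2_eq_2 less_2 field_simps power2_eq_square)
    have "tfm ?A ?B ?C ?D s = V * map_mat complex_of_real ?B + map_mat complex_of_real ?D"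
      by (rule tfm_eq_of_left_solution[OF _ _ Y _ VM]) (auto simp: V_def)
    then show "?H s = tfm ?A ?B ?C ?D s"
      using \<open>s \<noteq> 0\<close> by (intro eq_matI)
        (auto simp: V_def scalar_prod_def numeral_2_eq_2 less_2 field_simps power2_eq_square)
  qed
qed

lemma double_integrator_proper:
  "proper_rational_tf [0, 0, 1] [1, 0, 0] (\<lambda>s. mat 1 1 (\<lambda>_. 1 / s ^ 2))"
  unfolding proper_rational_tf_def
proof (intro conjI allI impI)
  fix k l :: nat assume "k < sum_list [0, 0, 1]" "l < sum_list [1, 0, 0]"
  then show "\<exists>n d :: real poly. d \<noteq> 0 \<and> degree n \<le> degree d \<and>
      (\<forall>\<^sub>F s in cofinite. mat 1 1 (\<lambda>_. 1 / s ^ 2) $$ (k, l) =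
        poly (map_poly complex_of_real n) s / poly (map_poly complex_of_real d) s)"
    by (intro exI[of _ "[:1:]"] exI[of _ "[:0, 0, 1:]"]) (simp add: power2_eq_square)
qed simp

lemma double_integrator_not_tf_structured:
  "\<not> tf_structured (\<lambda>i j. i = j \<or> (i = 1 \<and> j = 0) \<or> (i = 2 \<and> j = 1)) [0, 0, 1] [1, 0, 0]
     (\<lambda>s. mat 1 1 (\<lambda>_. 1 / s ^ 2))"
proof
  have "blk [0, 0, 1] 0 = 2" and "blk [1, 0, 0] 0 = 0"
    by (auto intro: blk_eqI)
  moreover assume "tf_structured (\<lambda>i j. i = j \<or> (i = 1 \<and> j = 0) \<or> (i = 2 \<and> j = 1))
    [0, 0, 1] [1, 0, 0] (\<lambda>s. mat 1 1 (\<lambda>_. 1 / s ^ 2))"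
  ultimately have "\<forall>\<^sub>F s in cofinite. 1 / s ^ 2 = (0 :: complex)"
    unfolding tf_structured_def by auto
  then have "finite (UNIV - {0 :: complex})"
    by (simp add: eventually_cofinite Compl_eq_Diff_UNIV[symmetric])
  then show False
    by (simp add: infinite_UNIV_char_0)
qed

(* Node 0 carries the input, node 2 the output, and node 1 relays: the chain of integrators
   0 -> 1 -> 2 only uses the edges (1, 0) and (2, 1), yet 1/s^2 couples node 2 to node 0. *)

lemma realizable_not_tf_structured:
  "\<exists>(N::nat) (Adj :: nat \<Rightarrow> nat \<Rightarrow> bool) (ps::nat list) (ms::nat list) H.
     length ps = N \<and> length ms = N \<and> (\<forall>i < N. Adj i i) \<and>
     proper_rational_tf ps ms H \<and>
     structured_realizable Adj ps ms H \<and> network_realizable Adj ps ms H \<and>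
     \<not> tf_structured Adj ps ms H"
proof -
  define Adj :: "nat \<Rightarrow> nat \<Rightarrow> bool" where "Adj = (\<lambda>i j. i = j \<or> (i = 1 \<and> j = 0) \<or> (i = 2 \<and> j = 1))"
  define ps :: "nat list" where "ps = [0, 0, 1]"
  define ms :: "nat list" where "ms = [1, 0, 0]"
  define ns :: "nat list" where "ns = [0, 1, 1]"
  define H :: "complex \<Rightarrow> complex mat" where "H = (\<lambda>s. mat 1 1 (\<lambda>_. 1 / s ^ 2))"
  define A :: "real mat" where "A = mat 2 2 (\<lambda>(i, j). if i = 1 \<and> j = 0 then 1 else 0)"
  define B :: "real mat" where "B = mat 2 1 (\<lambda>(i, j). if i = 0 then 1 else 0)"
  define C :: "real mat" where "C = mat 1 2 (\<lambda>(i, j). if j = 1 then 1 else 0)"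
  have blk: "blk ps 0 = 2" "blk ms 0 = 0" "blk ns 0 = 1" "blk ns 1 = 2"
    by (auto simp: ps_def ms_def ns_def intro: blk_eqI)
  have sums: "sum_list ps = 1" "sum_list ms = 1" "sum_list ns = 2"
    by (simp_all add: ps_def ms_def ns_def)
  have less_2: "i < 2 \<longleftrightarrow> i = 0 \<or> i = 1" for i :: nat
    by auto
  have adj: "\<forall>i < length ps. Adj i i"
    by (simp add: ps_def Adj_def)
  have "structured Adj ns ns A" and "structured Adj ns ms B" and C: "block_diag ps ns C"
    and D: "block_diag ps ms (0\<^sub>m 1 1 :: real mat)"
    unfolding block_diag_def structured_def sums using blk
    by (auto simp: A_def B_def C_def Adj_def less_2)
  moreover note block_diag_imp_structured[where Adj = Adj, OF C adj]
    block_diag_imp_structured[where Adj = Adj, OF D adj]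
  moreover have "length ns = length ps"
    by (simp add: ps_def ns_def)
  moreover note double_integrator_realization[folded A_def B_def C_def H_def]
  ultimately have "structured_realizable Adj ps ms H" and "network_realizable Adj ps ms H"
    unfolding structured_realizable_def network_realizable_def using C D by blast+
  with adj show ?thesis
    using double_integrator_proper double_integrator_not_tf_structured
    by (intro exI[of _ 3] exI[of _ Adj] exI[of _ ps] exI[of _ ms] exI[of _ H])
      (simp add: Adj_def ps_def ms_def H_def)
qed

theorem lemma1:
  shows "(\<forall>(N::nat) (Adj :: nat \<Rightarrow> nat \<Rightarrow> bool) (ps::nat list) (ms::nat list) H.
            length ps = N \<and> length ms = N \<and> (\<forall>i < N. Adj i i) \<and>
            proper_rational_tf ps ms H \<and> tf_structured Adj ps ms H \<longrightarrow>
              structured_realizable Adj ps ms H \<and>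
              (feedthrough_block_diag ps ms H \<longrightarrow> network_realizable Adj ps ms H))
       \<and> (\<exists>(N::nat) (Adj :: nat \<Rightarrow> nat \<Rightarrow> bool) (ps::nat list) (ms::nat list) H.
            length ps = N \<and> length ms = N \<and> (\<forall>i < N. Adj i i) \<and>
            proper_rational_tf ps ms H \<and>
            structured_realizable Adj ps ms H \<and> network_realizable Adj ps ms H \<and>
            \<not> tf_structured Adj ps ms H)"
proof (intro conjI allI impI)
  fix N Adj ps ms and H :: "complex \<Rightarrow> complex mat"
  assume "length ps = N \<and> length ms = N \<and> (\<forall>i < N. Adj i i) \<and>
    proper_rational_tf ps ms H \<and> tf_structured Adj ps ms H"
  then show "structured_realizable Adj ps ms H"
    by (intro tf_structured_imp_realizable(1)) auto
next
  fix N Adj ps ms and H :: "complex \<Rightarrow> complex mat"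
  assume "length ps = N \<and> length ms = N \<and> (\<forall>i < N. Adj i i) \<and>
    proper_rational_tf ps ms H \<and> tf_structured Adj ps ms H"
    and "feedthrough_block_diag ps ms H"
  then show "network_realizable Adj ps ms H"
    by (intro tf_structured_imp_realizable(2)) auto
qed (rule realizable_not_tf_structured)

end
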